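(* Let $M,K\ge 1$, let $\mathbf{H}=[\mathbf{h}_{:1},\dots,\mathbf{h}_{:K}]\in\mathbb{C}^{M\times K}$, let $P>0$, $N_0>0$, and let each user $k\in\{1,\dots,K\}$ have a rate $r_k\ge 0$. Let $\hat S\subseteq\{1,\dots,K\}$ and let $o\neq p$ be two users not in $\hat S$, with $C=\{o,p\}$. Suppose $$R_o^{\hat S}\ge r_o,\qquad R_p^{\hat S}\ge r_p,\qquad R_C^{\hat S}<r_o+r_p .$$ Then, given that the users in $\hat S$ are in outage, both $o$ and $p$ are in outage; that is, there is no set $S^*\subseteq\{1,\dots,K\}\setminus\hat S$ with $S^*\cap\{o,p\}\neq\emptyset$ such that for every $S\subseteq S^*$, $$\sum_{k\in S}r_k\le \log_2\det\!\Big(\mathbf{I}_M+\tfrac{P}{N_0}\mathbf{H}_{:S}\mathbf{H}_{:S}^{\mathrm H}\big(\mathbf{I}_M+\tfrac{P}{N_0}\mathbf{H}_{:\bar S}\mathbf{H}_{:\bar S}^{\mathrm H}\big)^{-1}\Big),\qquad \bar S=\{1,\dots,K\}\setminus S^* .$$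
   Context: For a set $A\subseteq\{1,\dots,K\}$, $\mathbf{H}_{:A}$ denotes the $M\times|A|$ submatrix of $\mathbf{H}$ with columns $\{\mathbf{h}_{:k}:k\in A\}$ (for $A=\emptyset$ the term $\mathbf{H}_{:A}\mathbf{H}_{:A}^{\mathrm H}$ is the zero matrix), and the superscript $\mathrm H$ is conjugate transpose. For sets $X,Y\subseteq\{1,\dots,K\}$, $R_X^{Y}=\log_2\det\big(\mathbf{I}_M+\frac{P}{N_0}\mathbf{H}_{:X}\mathbf{H}_{:X}^{\mathrm H}(\mathbf{I}_M+\frac{P}{N_0}\mathbf{H}_{:Y}\mathbf{H}_{:Y}^{\mathrm H})^{-1}\big)$ is the achievable (sum) rate of the users in $X$ under interference from the users in $Y$; for a single user $x$ write $R_x^Y=R_{\{x\}}^Y$. A set $S^*$ of users satisfying the displayed condition for all $S\subseteq S^*$ is a set of users that can all be successfully decoded (by successive and/or joint group decoding) at their rates while the remaining users $\{1,\dots,K\}\setminus S^*$ are treated as noise; a user belonging to no such set is said to be in outage. This models a Gaussian multiple-access channel $\mathbf{y}=\mathbf{H}\mathbf{x}+\mathbf{z}$ with $K$ single-antenna transmitters each of power $P$, an $M$-antenna receiver, and noise $\mathcal{CN}(0,N_0\mathbf{I}_M)$. *)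

theory Defs
  imports "Jordan_Normal_Form.Schur_Decomposition" "Jordan_Normal_Form.Gauss_Jordan_Elimination"
    "Jordan_Normal_Form.Determinant"
begin

text \<open>Users are numbered 1..K; user k corresponds to column k-1 of the M x K
  matrix H (Jordan_Normal_Form matrices are 0-indexed).\<close>

definition Hcols :: "nat \<Rightarrow> complex mat \<Rightarrow> nat set \<Rightarrow> complex mat" where
  "Hcols M H A = mat_of_cols M (map (\<lambda>k. col H (k - 1)) (sorted_list_of_set A))"

definition gram :: "nat \<Rightarrow> complex mat \<Rightarrow> nat set \<Rightarrow> complex mat" where
  "gram M H A = Hcols M H A * mat_adjoint (Hcols M H A)"

text \<open>R_X^Y = log2 det(I + P/N0 H_X H_X^H (I + P/N0 H_Y H_Y^H)^{-1}).
  The determinant is real and positive; we take its real part.\<close>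
definition rate :: "nat \<Rightarrow> complex mat \<Rightarrow> real \<Rightarrow> real \<Rightarrow> nat set \<Rightarrow> nat set \<Rightarrow> real" where
  "rate M H P N0 X Y =
     log 2 (Re (det (1\<^sub>m M + (complex_of_real (P / N0) \<cdot>\<^sub>m gram M H X) *
        the (mat_inverse (1\<^sub>m M + complex_of_real (P / N0) \<cdot>\<^sub>m gram M H Y)))))"

end

(* Write c = P / N0 and f S = log2 det (I + c H_S H_S^H). Then R_X^Y = f (X \<union> Y) - f Y, and by the
   matrix determinant lemma the marginal gain f (S \<union> {k}) - f S is log2 (1 + c h_k^H B_S^-1 h_k) with
   B_S = I + c H_S H_S^H. This quantity decreases as S grows, so f has diminishing returns. If some S*
   disjoint from Shat were decodable, its complement T would contain Shat, and for C = S* \<inter> {o, p}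
   diminishing returns give R_C^T \<le> R_C^Shat < r_o + r_p when C = {o, p}, and
   R_o^T \<le> R_{o,p}^Shat - R_p^Shat < r_o when C = {o}; either way C could not be decoded. *)

theory Submission
  imports Defs
begin

section \<open>Set functions with diminishing returns\<close>

definition diminishing_returns :: "('a set \<Rightarrow> real) \<Rightarrow> bool" where
  "diminishing_returns f \<longleftrightarrow>
     (\<forall>Y Z k. finite Z \<longrightarrow> Y \<subseteq> Z \<longrightarrow> k \<notin> Z \<longrightarrow> f (insert k Z) - f Z \<le> f (insert k Y) - f Y)"

lemma diminishing_returnsD:
  assumes "diminishing_returns f" "finite Z" "Y \<subseteq> Z" "k \<notin> Z"
  shows "f (insert k Z) - f Z \<le> f (insert k Y) - f Y"
  using assms unfolding diminishing_returns_def by blast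

lemma diminishing_returns_gain_antimono:
  assumes f: "diminishing_returns f" and "finite A" and Z: "finite Z" "Y \<subseteq> Z" and "A \<inter> Z = {}"
  shows "f (A \<union> Z) - f Z \<le> f (A \<union> Y) - f Y"
  using assms(2,5)
proof (induction A rule: finite_induct)
  case empty
  then show ?case by simp
next
  case (insert a A)
  have "f (insert a (A \<union> Z)) - f (A \<union> Z) \<le> f (insert a (A \<union> Y)) - f (A \<union> Y)"
    by (rule diminishing_returnsD[OF f]) (use insert Z in auto)
  moreover have "f (A \<union> Z) - f Z \<le> f (A \<union> Y) - f Y" using insert by blast
  ultimately show ?case by simp
qed

lemma diminishing_returns_single_gain:
  assumes f: "diminishing_returns f" and "finite Z" "insert v Y \<subseteq> Z" "u \<notin> Z"
  shows "f (insert u Z) - f Z \<le> f (insert u (insert v Y)) - f (insert v Y)"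
proof -
  have "{u} \<inter> Z = {}" using assms(4) by blast
  from diminishing_returns_gain_antimono[OF f _ assms(2,3) this]
  show ?thesis by (simp only: insert_is_Un[symmetric] finite.emptyI finite.insertI)
qed

lemma diminishing_returns_pair_gain_less:
  assumes f: "diminishing_returns f" and Z: "finite Z" "Y \<subseteq> Z"
    and uv: "u \<noteq> v" "u \<notin> Y" "v \<notin> Y"
    and gain_u: "f (insert u Y) - f Y \<ge> r u" and gain_v: "f (insert v Y) - f Y \<ge> r v"
    and gain_uv: "f (insert u (insert v Y)) - f Y < r u + r v"
    and C: "C \<subseteq> {u, v}" "C \<noteq> {}" "C \<inter> Z = {}" "{u, v} - C \<subseteq> Z"
  shows "f (C \<union> Z) - f Z < sum r C"
proof -
  consider "C = {u, v}" | "C = {u}" | "C = {v}" using C(1,2) by blast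
  then show ?thesis
  proof cases
    case 1
    have "f (C \<union> Z) - f Z \<le> f (C \<union> Y) - f Y"
      by (rule diminishing_returns_gain_antimono[OF f _ Z C(3)]) (simp add: 1)
    moreover have "C \<union> Y = insert u (insert v Y)" "sum r C = r u + r v" using 1 uv(1) by auto
    ultimately show ?thesis using gain_uv by (simp only:)
  next
    case 2
    have "insert v Y \<subseteq> Z" "u \<notin> Z" using Z(2) C(3,4) uv(1) unfolding 2 by blast+
    from diminishing_returns_single_gain[OF f Z(1) this]
    moreover have "C \<union> Z = insert u Z" "sum r C = r u" unfolding 2 by simp_all
    ultimately show ?thesis using gain_v gain_uv by (simp only:)
  next
    case 3
    have "insert u Y \<subseteq> Z" "v \<notin> Z" using Z(2) C(3,4) uv(1) unfolding 3 by blast+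
    from diminishing_returns_single_gain[OF f Z(1) this]
    moreover have "insert v (insert u Y) = insert u (insert v Y)" by blast
    moreover have "C \<union> Z = insert v Z" "sum r C = r v" unfolding 3 by simp_all
    ultimately show ?thesis using gain_u gain_uv by (simp only:)
  qed
qed

section \<open>Matrix identities and Hermitian forms\<close>

lemma det_add_rank_one:
  fixes B Bi V W :: "'a :: idom mat"
  assumes B: "B \<in> carrier_mat n n" and Bi: "Bi \<in> carrier_mat n n" and inv: "Bi * B = 1\<^sub>m n"
    and V: "V \<in> carrier_mat n 1" and W: "W \<in> carrier_mat 1 n"
  shows "det (B + V * W) = det B * (1 + (W * Bi * V) $$ (0,0))"
proof -
  \<comment> \<open>Block elimination on both sides of \<open>X = [B, -V; W, 1]\<close> with unimodular factors.\<close>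
  define X where "X = four_block_mat B (-V) W (1\<^sub>m 1)"
  define L where "L = four_block_mat (1\<^sub>m n) (0\<^sub>m n 1) (-(W * Bi)) (1\<^sub>m 1)"
  define R where "R = four_block_mat (1\<^sub>m n) (0\<^sub>m n 1) (-W) (1\<^sub>m 1)"
  have WBi: "W * Bi \<in> carrier_mat 1 n" using W Bi by auto
  have X: "X \<in> carrier_mat (n+1) (n+1)" unfolding X_def using B V W by auto
  have L: "L \<in> carrier_mat (n+1) (n+1)" unfolding L_def using WBi by auto
  have R: "R \<in> carrier_mat (n+1) (n+1)" unfolding R_def using W by auto
  have det_L: "det L = 1" unfolding L_def
    using det_four_block_mat_upper_right_zero[OF one_carrier_mat refl uminus_carrier_mat[OF WBi]
        one_carrier_mat] by simp
  have det_R: "det R = 1" unfolding R_def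
    using det_four_block_mat_upper_right_zero[OF one_carrier_mat refl uminus_carrier_mat[OF W]
        one_carrier_mat] by simp
  have "- (W * Bi) * B = - (W * (Bi * B))"
    unfolding assoc_mult_mat[OF W Bi B, symmetric] using W Bi B by (intro uminus_mult_left_mat) auto
  then have lower_left: "- (W * Bi) * B + 1\<^sub>m 1 * W = 0\<^sub>m 1 n"
    using inv W by simp
  have lower_right: "- (W * Bi) * - V + 1\<^sub>m 1 * 1\<^sub>m 1 = W * Bi * V + 1\<^sub>m 1"
    using W Bi V by simp
  have LX: "L * X = four_block_mat B (-V) (0\<^sub>m 1 n) (W * Bi * V + 1\<^sub>m 1)"
    unfolding L_def X_def
    by (subst mult_four_block_mat[OF one_carrier_mat zero_carrier_mat uminus_carrier_mat[OF WBi]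
          one_carrier_mat B uminus_carrier_mat[OF V] W one_carrier_mat])
      (use B V W WBi lower_left lower_right in auto)
  have XR: "X * R = four_block_mat (B + V * W) (-V) (0\<^sub>m 1 n) (1\<^sub>m 1)"
    unfolding R_def X_def
    by (subst mult_four_block_mat[OF B uminus_carrier_mat[OF V] W one_carrier_mat
          one_carrier_mat zero_carrier_mat uminus_carrier_mat[OF W] one_carrier_mat])
      (use B V W in auto)
  have "det B * det (W * Bi * V + 1\<^sub>m 1) = det (L * X)"
    unfolding LX by (rule det_four_block_mat_lower_left_zero[symmetric]) (use B V W Bi in auto)
  also have "\<dots> = det (X * R)" using det_mult[OF L X] det_mult[OF X R] det_L det_R by simp
  also have "\<dots> = det (B + V * W)"
    unfolding XR by (subst det_four_block_mat_lower_left_zero[of _ n _ 1]) (use B V W in auto)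
  finally show ?thesis
    using det_single[of "W * Bi * V + 1\<^sub>m 1"] W Bi V by (simp add: ac_simps)
qed

lemma right_inverse_mult_apply:
  fixes B Bi :: "'a :: comm_ring_1 mat"
  assumes "B \<in> carrier_mat n n" "Bi \<in> carrier_mat n n" "B * Bi = 1\<^sub>m n" "i < n"
  shows "(\<Sum>j<n. B $$ (i,j) * (\<Sum>l<n. Bi $$ (j,l) * u l)) = u i"
proof -
  have "(\<Sum>j<n. B $$ (i,j) * (\<Sum>l<n. Bi $$ (j,l) * u l)) = (\<Sum>l<n. (\<Sum>j<n. B $$ (i,j) * Bi $$ (j,l)) * u l)"
    by (simp add: sum_distrib_left sum_distrib_right mult.assoc, rule sum.swap)
  also have "\<dots> = (\<Sum>l<n. (B * Bi) $$ (i,l) * u l)"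
    using assms(1,2,4) by (intro sum.cong refl) (simp add: scalar_prod_def atLeast0LessThan)
  also have "\<dots> = (\<Sum>l<n. (if l = i then u i else 0))"
    using assms(4) by (intro sum.cong refl) (simp add: assms(3))
  also have "\<dots> = u i" using assms(4) by simp
  finally show ?thesis .
qed

definition sesq_form :: "nat \<Rightarrow> complex mat \<Rightarrow> (nat \<Rightarrow> complex) \<Rightarrow> (nat \<Rightarrow> complex) \<Rightarrow> complex" where
  "sesq_form n A x z = (\<Sum>i<n. \<Sum>j<n. cnj (x i) * A $$ (i,j) * z j)"

lemma sesq_form_hermitian_swap:
  assumes "\<And>i j. i < n \<Longrightarrow> j < n \<Longrightarrow> A $$ (j,i) = cnj (A $$ (i,j))"
  shows "sesq_form n A x z = cnj (sesq_form n A z x)"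
proof -
  have "cnj (sesq_form n A z x) = (\<Sum>i<n. \<Sum>j<n. z i * A $$ (j,i) * cnj (x j))"
    unfolding sesq_form_def using assms[symmetric] by (simp add: cnj_sum)
  also have "\<dots> = (\<Sum>j<n. \<Sum>i<n. z i * A $$ (j,i) * cnj (x j))" by (rule sum.swap)
  also have "\<dots> = sesq_form n A x z" unfolding sesq_form_def by (simp add: mult_ac)
  finally show ?thesis by simp
qed

lemma sesq_form_diff:
  "sesq_form n A (\<lambda>i. a i - b i) (\<lambda>i. a i - b i) =
     sesq_form n A a a - sesq_form n A a b - sesq_form n A b a + sesq_form n A b b"
proof -
  have "\<And>i j. cnj (a i - b i) * A $$ (i,j) * (a j - b j) =
     cnj (a i) * A $$ (i,j) * a j - cnj (a i) * A $$ (i,j) * b j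
       - cnj (b i) * A $$ (i,j) * a j + cnj (b i) * A $$ (i,j) * b j"
    by (simp add: algebra_simps)
  then show ?thesis unfolding sesq_form_def by (simp only: sum.distrib sum_subtractf)
qed

lemma sesq_form_solution:
  assumes "\<And>i. i < n \<Longrightarrow> (\<Sum>j<n. A $$ (i,j) * y j) = u i"
  shows "sesq_form n A x y = (\<Sum>i<n. cnj (x i) * u i)"
  unfolding sesq_form_def
proof (rule sum.cong[OF refl])
  fix i assume "i \<in> {..<n}"
  then have "(\<Sum>j<n. A $$ (i,j) * y j) = u i" using assms by simp
  then show "(\<Sum>j<n. cnj (x i) * A $$ (i, j) * y j) = cnj (x i) * u i"
    by (simp add: sum_distrib_left[symmetric] mult.assoc)
qed

section \<open>Covariance of the received signal\<close>

lemma gram_carrier: "gram M H S \<in> carrier_mat M M"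
  unfolding gram_def Hcols_def mat_adjoint_def by auto

lemma gram_index:
  assumes "finite S" "i < M" "j < M" "dim_row H = M"
  shows "gram M H S $$ (i,j) = (\<Sum>k\<in>S. H $$ (i, k - 1) * cnj (H $$ (j, k - 1)))"
proof -
  let ?xs = "sorted_list_of_set S"
  have "gram M H S $$ (i,j) = (\<Sum>l<length ?xs. H $$ (i, ?xs!l - 1) * cnj (H $$ (j, ?xs!l - 1)))"
    unfolding gram_def Hcols_def mat_adjoint_def using assms
    by (auto simp: scalar_prod_def mat_of_cols_index mat_of_rows_index col_def intro!: sum.cong)
  also have "\<dots> = (\<Sum>k\<leftarrow>?xs. H $$ (i, k - 1) * cnj (H $$ (j, k - 1)))"
    by (simp add: sum_list_sum_nth atLeast0LessThan)
  also have "\<dots> = (\<Sum>k\<in>S. H $$ (i, k - 1) * cnj (H $$ (j, k - 1)))"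
    using assms(1) by (simp add: sum_list_distinct_conv_sum_set)
  finally show ?thesis .
qed

lemma Hcols_singleton:
  assumes "dim_row H = M"
  shows "Hcols M H {k} = mat M 1 (\<lambda>(i,_). H $$ (i, k - 1))"
  by (rule eq_matI) (use assms in \<open>auto simp: Hcols_def mat_of_cols_index col_def\<close>)

lemma mat_adjoint_Hcols_singleton:
  assumes "dim_row H = M"
  shows "mat_adjoint (Hcols M H {k}) = mat 1 M (\<lambda>(_,j). cnj (H $$ (j, k - 1)))"
  unfolding Hcols_singleton[OF assms]
  by (rule eq_matI) (auto simp: mat_adjoint_def mat_of_rows_index cols_def)

text \<open>Noise-normalised covariance of the received signal when the users in \<open>S\<close> transmit;
  \<open>c\<close> stands for \<open>P / N\<^sub>0\<close>.\<close>
definition cov_mat :: "nat \<Rightarrow> complex mat \<Rightarrow> real \<Rightarrow> nat set \<Rightarrow> complex mat" where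
  "cov_mat M H c S = 1\<^sub>m M + complex_of_real c \<cdot>\<^sub>m gram M H S"

lemma cov_mat_carrier: "cov_mat M H c S \<in> carrier_mat M M"
  unfolding cov_mat_def using gram_carrier by auto

lemma cov_mat_index:
  assumes "finite S" "i < M" "j < M" "dim_row H = M"
  shows "cov_mat M H c S $$ (i,j) =
    (if i = j then 1 else 0) + complex_of_real c * (\<Sum>k\<in>S. H $$ (i, k - 1) * cnj (H $$ (j, k - 1)))"
  unfolding cov_mat_def using assms gram_carrier[of M H S] by (simp add: gram_index)

lemma cov_mat_hermitian:
  assumes "finite S" "i < M" "j < M" "dim_row H = M"
  shows "cov_mat M H c S $$ (j,i) = cnj (cov_mat M H c S $$ (i,j))"
  using assms by (simp add: cov_mat_index mult.commute)

lemma cov_mat_empty: "dim_row H = M \<Longrightarrow> cov_mat M H c {} = 1\<^sub>m M"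
  by (rule eq_matI) (use cov_mat_carrier[of M H c "{}"] in \<open>auto simp: cov_mat_index\<close>)

lemma cov_mat_union:
  assumes "finite X" "finite Y" "X \<inter> Y = {}" "dim_row H = M"
  shows "cov_mat M H c (X \<union> Y) = cov_mat M H c Y + complex_of_real c \<cdot>\<^sub>m gram M H X"
proof (rule eq_matI)
  fix i j assume "i < dim_row (cov_mat M H c Y + complex_of_real c \<cdot>\<^sub>m gram M H X)"
    and "j < dim_col (cov_mat M H c Y + complex_of_real c \<cdot>\<^sub>m gram M H X)"
  then have "i < M" "j < M" using cov_mat_carrier[of M H c Y] gram_carrier[of M H X] by auto
  then show "cov_mat M H c (X \<union> Y) $$ (i, j) = (cov_mat M H c Y + complex_of_real c \<cdot>\<^sub>m gram M H X) $$ (i, j)"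
    using assms cov_mat_carrier[of M H c Y] gram_carrier[of M H X]
    by (simp add: cov_mat_index gram_index sum.union_disjoint distrib_left)
qed (use cov_mat_carrier[of M H c] gram_carrier[of M H X] in auto)

lemma cov_mat_insert:
  assumes "finite S" "k \<notin> S" "dim_row H = M"
  shows "cov_mat M H c (insert k S) =
    cov_mat M H c S + (complex_of_real c \<cdot>\<^sub>m Hcols M H {k}) * mat_adjoint (Hcols M H {k})"
proof -
  have "Hcols M H {k} \<in> carrier_mat M 1"
    by (simp add: Hcols_singleton[OF assms(3)])
  moreover have "mat_adjoint (Hcols M H {k}) \<in> carrier_mat 1 M"
    by (subst mat_adjoint_Hcols_singleton[OF assms(3)]) simp
  ultimately have "(complex_of_real c \<cdot>\<^sub>m Hcols M H {k}) * mat_adjoint (Hcols M H {k}) =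
      complex_of_real c \<cdot>\<^sub>m gram M H {k}"
    unfolding gram_def by (rule mult_smult_assoc_mat)
  then show ?thesis using cov_mat_union[of "{k}" S H M c] assms by simp
qed

definition cov_form :: "nat \<Rightarrow> complex mat \<Rightarrow> real \<Rightarrow> nat set \<Rightarrow> (nat \<Rightarrow> complex) \<Rightarrow> real" where
  "cov_form M H c S x =
     (\<Sum>i<M. (cmod (x i))\<^sup>2) + c * (\<Sum>k\<in>S. (cmod (\<Sum>j<M. cnj (H $$ (j, k - 1)) * x j))\<^sup>2)"

lemma cov_form_nonneg: "c \<ge> 0 \<Longrightarrow> cov_form M H c S x \<ge> 0"
  unfolding cov_form_def by (intro add_nonneg_nonneg mult_nonneg_nonneg sum_nonneg) auto

lemma cov_form_mono: "c \<ge> 0 \<Longrightarrow> finite Z \<Longrightarrow> Y \<subseteq> Z \<Longrightarrow> cov_form M H c Y x \<le> cov_form M H c Z x"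
  unfolding cov_form_def by (intro add_left_mono mult_left_mono sum_mono2) auto

lemma sesq_form_cov_mat:
  assumes "finite S" "dim_row H = M"
  shows "sesq_form M (cov_mat M H c S) x x = complex_of_real (cov_form M H c S x)"
proof -
  let ?h = "\<lambda>i k. H $$ (i, k - 1)"
  let ?s = "\<lambda>k. \<Sum>j<M. cnj (?h j k) * x j"
  let ?g = "\<lambda>i j. \<Sum>k\<in>S. complex_of_real c * ((cnj (x i) * ?h i k) * (cnj (?h j k) * x j))"
  have entry: "cnj (x i) * cov_mat M H c S $$ (i,j) * x j =
      (if i = j then cnj (x i) * x i else 0) + ?g i j" if "i < M" "j < M" for i j
    using that assms
    by (simp add: cov_mat_index distrib_left distrib_right sum_distrib_left sum_distrib_right mult_ac)
  have identity_part: "(\<Sum>i<M. \<Sum>j<M. if i = j then cnj (x i) * x i else 0) =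
      complex_of_real (\<Sum>i<M. (cmod (x i))\<^sup>2)"
    by (simp add: complex_norm_square mult.commute del: of_real_power)
  have "(\<Sum>i<M. \<Sum>j<M. ?g i j) = (\<Sum>k\<in>S. \<Sum>i<M. \<Sum>j<M.
      complex_of_real c * ((cnj (x i) * ?h i k) * (cnj (?h j k) * x j)))"
    by (subst sum.swap) (simp add: sum.swap[of _ S])
  also have "\<dots> = (\<Sum>k\<in>S. complex_of_real c * (cnj (?s k) * ?s k))"
    by (simp add: sum_product sum_distrib_left cnj_sum mult_ac)
  also have "\<dots> = (\<Sum>k\<in>S. complex_of_real c * complex_of_real ((cmod (?s k))\<^sup>2))"
    by (simp only: complex_norm_square mult.commute)
  also have "\<dots> = complex_of_real (c * (\<Sum>k\<in>S. (cmod (?s k))\<^sup>2))"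
    by (simp only: of_real_mult of_real_sum sum_distrib_left)
  finally have gram_part: "(\<Sum>i<M. \<Sum>j<M. ?g i j) = complex_of_real (c * (\<Sum>k\<in>S. (cmod (?s k))\<^sup>2))" .
  have "sesq_form M (cov_mat M H c S) x x =
      (\<Sum>i<M. \<Sum>j<M. (if i = j then cnj (x i) * x i else 0) + ?g i j)"
    unfolding sesq_form_def by (intro sum.cong refl) (simp add: entry)
  also have "\<dots> = complex_of_real (cov_form M H c S x)"
    unfolding sum.distrib identity_part gram_part cov_form_def by simp
  finally show ?thesis .
qed

definition cov_inv :: "nat \<Rightarrow> complex mat \<Rightarrow> real \<Rightarrow> nat set \<Rightarrow> complex mat" where
  "cov_inv M H c S = the (mat_inverse (cov_mat M H c S))"

lemma cov_inv:
  assumes "det (cov_mat M H c S) \<noteq> 0"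
  shows "cov_inv M H c S \<in> carrier_mat M M"
    and "cov_mat M H c S * cov_inv M H c S = 1\<^sub>m M"
    and "cov_inv M H c S * cov_mat M H c S = 1\<^sub>m M"
proof -
  have "cov_mat M H c S \<in> Units (ring_mat TYPE(complex) M ())"
    by (rule det_non_zero_imp_unit[OF cov_mat_carrier assms])
  then obtain B where "mat_inverse (cov_mat M H c S) = Some B"
    using mat_inverse(1)[OF cov_mat_carrier, of M H c S, where b = "()"] by (cases "mat_inverse (cov_mat M H c S)") auto
  then have "mat_inverse (cov_mat M H c S) = Some (cov_inv M H c S)"
    unfolding cov_inv_def by simp
  from mat_inverse(2)[OF cov_mat_carrier this]
  show "cov_inv M H c S \<in> carrier_mat M M" "cov_mat M H c S * cov_inv M H c S = 1\<^sub>m M"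
    "cov_inv M H c S * cov_mat M H c S = 1\<^sub>m M" by auto
qed

text \<open>The quantity \<open>h\<^sub>k\<^sup>H B\<^sub>S\<^sup>-\<^sup>1 h\<^sub>k\<close>
  (\<open>1/c\<close> times the MMSE SINR of user \<open>k\<close> against \<open>S\<close>) is defined as the covariance form at
  \<open>inv_chan\<close>, which makes it visibly real and nonnegative.\<close>
definition inv_chan :: "nat \<Rightarrow> complex mat \<Rightarrow> real \<Rightarrow> nat set \<Rightarrow> nat \<Rightarrow> nat \<Rightarrow> complex" where
  "inv_chan M H c S k i = (\<Sum>l<M. cov_inv M H c S $$ (i,l) * H $$ (l, k - 1))"

definition inv_quad :: "nat \<Rightarrow> complex mat \<Rightarrow> real \<Rightarrow> nat set \<Rightarrow> nat \<Rightarrow> real" where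
  "inv_quad M H c S k = cov_form M H c S (inv_chan M H c S k)"

lemma inv_quad_nonneg: "c \<ge> 0 \<Longrightarrow> inv_quad M H c S k \<ge> 0"
  unfolding inv_quad_def by (rule cov_form_nonneg)

lemma cov_mat_inv_chan:
  assumes "det (cov_mat M H c S) \<noteq> 0" "i < M"
  shows "(\<Sum>j<M. cov_mat M H c S $$ (i,j) * inv_chan M H c S k j) = H $$ (i, k - 1)"
  unfolding inv_chan_def using right_inverse_mult_apply[OF cov_mat_carrier cov_inv(1,2)[OF assms(1)] assms(2)] .

lemma chan_inner_inv_chan:
  assumes "finite S" "dim_row H = M" "det (cov_mat M H c S) \<noteq> 0"
  shows "(\<Sum>i<M. cnj (H $$ (i, k - 1)) * inv_chan M H c S k i) = complex_of_real (inv_quad M H c S k)"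
proof -
  let ?y = "inv_chan M H c S k"
  have "complex_of_real (inv_quad M H c S k) = sesq_form M (cov_mat M H c S) ?y ?y"
    unfolding inv_quad_def sesq_form_cov_mat[OF assms(1,2)] ..
  also have "\<dots> = (\<Sum>i<M. cnj (?y i) * H $$ (i, k - 1))"
    by (rule sesq_form_solution, rule cov_mat_inv_chan[OF assms(3)])
  also have "\<dots> = cnj (\<Sum>i<M. cnj (H $$ (i, k - 1)) * ?y i)"
    by (simp add: cnj_sum mult.commute)
  finally show ?thesis by (metis complex_cnj_cnj complex_cnj_complex_of_real)
qed

lemma det_cov_mat_insert:
  assumes "finite S" "k \<notin> S" "dim_row H = M" "det (cov_mat M H c S) \<noteq> 0"
  shows "det (cov_mat M H c (insert k S)) =
    det (cov_mat M H c S) * complex_of_real (1 + c * inv_quad M H c S k)"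
proof -
  let ?V = "complex_of_real c \<cdot>\<^sub>m Hcols M H {k}" and ?W = "mat_adjoint (Hcols M H {k})"
  let ?Bi = "cov_inv M H c S"
  have V: "?V = mat M 1 (\<lambda>(i,_). complex_of_real c * H $$ (i, k - 1))"
    unfolding Hcols_singleton[OF assms(3)] by (rule eq_matI) auto
  have W: "?W = mat 1 M (\<lambda>(_,j). cnj (H $$ (j, k - 1)))"
    by (rule mat_adjoint_Hcols_singleton[OF assms(3)])
  note Bi = cov_inv[OF assms(4)]
  have "(?W * ?Bi * ?V) $$ (0,0) =
      (\<Sum>l<M. (\<Sum>i<M. cnj (H $$ (i, k - 1)) * ?Bi $$ (i,l)) * (complex_of_real c * H $$ (l, k - 1)))"
    using Bi(1) unfolding V W by (simp add: scalar_prod_def atLeast0LessThan)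
  also have "\<dots> = complex_of_real c * (\<Sum>i<M. cnj (H $$ (i, k - 1)) * inv_chan M H c S k i)"
    unfolding inv_chan_def sum_distrib_right sum_distrib_left
    by (subst sum.swap) (simp add: mult_ac)
  also have "\<dots> = complex_of_real (c * inv_quad M H c S k)"
    using chan_inner_inv_chan[OF assms(1,3,4)] by simp
  finally have "(?W * ?Bi * ?V) $$ (0,0) = complex_of_real (c * inv_quad M H c S k)" .
  moreover have "det (cov_mat M H c S + ?V * ?W) = det (cov_mat M H c S) * (1 + (?W * ?Bi * ?V) $$ (0,0))"
    by (rule det_add_rank_one[OF cov_mat_carrier Bi(1,3)]) (auto simp: V W)
  ultimately show ?thesis unfolding cov_mat_insert[OF assms(1-3)] by simp
qed

lemma det_cov_mat_real_ge_one:
  assumes "finite S" "dim_row H = M" "c \<ge> 0"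
  shows "det (cov_mat M H c S) = complex_of_real (Re (det (cov_mat M H c S)))"
    and "Re (det (cov_mat M H c S)) \<ge> 1"
proof -
  have "det (cov_mat M H c S) = complex_of_real (Re (det (cov_mat M H c S))) \<and>
      Re (det (cov_mat M H c S)) \<ge> 1"
    using assms(1)
  proof (induction S rule: finite_induct)
    case empty
    then show ?case using cov_mat_empty[OF assms(2)] by simp
  next
    case (insert k S)
    let ?d = "Re (det (cov_mat M H c S))"
    have d: "det (cov_mat M H c S) = complex_of_real ?d" "?d \<ge> 1" using insert.IH by auto
    have "det (cov_mat M H c (insert k S)) = complex_of_real (?d * (1 + c * inv_quad M H c S k))"
      by (subst det_cov_mat_insert[OF insert.hyps assms(2)]) (use d in auto)
    moreover have "?d * (1 + c * inv_quad M H c S k) \<ge> 1 * 1"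
      using d(2) inv_quad_nonneg[OF assms(3)] assms(3) by (intro mult_mono) auto
    ultimately show ?case by simp
  qed
  then show "det (cov_mat M H c S) = complex_of_real (Re (det (cov_mat M H c S)))"
    and "Re (det (cov_mat M H c S)) \<ge> 1" by auto
qed

lemma det_cov_mat_nonzero: "finite S \<Longrightarrow> dim_row H = M \<Longrightarrow> c \<ge> 0 \<Longrightarrow> det (cov_mat M H c S) \<noteq> 0"
  using det_cov_mat_real_ge_one[of S H M c] by (metis Re_complex_of_real not_one_le_zero zero_complex.sel(1))

text \<open>With \<open>y = B\<^sub>Y\<^sup>-\<^sup>1 h\<close> and \<open>z = B\<^sub>Z\<^sup>-\<^sup>1 h\<close>, expanding \<open>0 \<le> (z - y)\<^sup>H B\<^sub>Y (z - y)\<close> and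
  bounding \<open>z\<^sup>H B\<^sub>Y z \<le> z\<^sup>H B\<^sub>Z z = h\<^sup>H z\<close> gives \<open>0 \<le> h\<^sup>H y - h\<^sup>H z\<close>.\<close>
lemma inv_quad_antimono:
  assumes Z: "finite Z" and YZ: "Y \<subseteq> Z" and HM: "dim_row H = M" and c: "c \<ge> 0"
  shows "inv_quad M H c Z k \<le> inv_quad M H c Y k"
proof -
  have Y: "finite Y" using Z YZ finite_subset by auto
  have nY: "det (cov_mat M H c Y) \<noteq> 0" and nZ: "det (cov_mat M H c Z) \<noteq> 0"
    using det_cov_mat_nonzero[OF _ HM c] Y Z by blast+
  let ?B = "cov_mat M H c Y"
  let ?y = "inv_chan M H c Y k" and ?z = "inv_chan M H c Z k"
  let ?d = "\<lambda>i. ?z i - ?y i"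
  have "sesq_form M ?B ?z ?y = (\<Sum>i<M. cnj (?z i) * H $$ (i, k - 1))"
    by (rule sesq_form_solution, rule cov_mat_inv_chan[OF nY])
  also have "\<dots> = cnj (\<Sum>i<M. cnj (H $$ (i, k - 1)) * ?z i)"
    by (simp add: cnj_sum mult.commute)
  also have "\<dots> = complex_of_real (inv_quad M H c Z k)"
    by (simp only: chan_inner_inv_chan[OF Z HM nZ] complex_cnj_complex_of_real)
  finally have zy: "sesq_form M ?B ?z ?y = complex_of_real (inv_quad M H c Z k)" .
  have "sesq_form M ?B ?y ?z = cnj (sesq_form M ?B ?z ?y)"
    by (rule sesq_form_hermitian_swap) (rule cov_mat_hermitian[OF Y _ _ HM])
  with zy have yz: "sesq_form M ?B ?y ?z = complex_of_real (inv_quad M H c Z k)" by simp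
  have "complex_of_real (cov_form M H c Y ?d) =
      complex_of_real (cov_form M H c Y ?z - 2 * inv_quad M H c Z k + inv_quad M H c Y k)"
    using sesq_form_diff[of M ?B ?z ?y] zy yz
    unfolding sesq_form_cov_mat[OF Y HM] inv_quad_def by simp
  then have "cov_form M H c Y ?d = cov_form M H c Y ?z - 2 * inv_quad M H c Z k + inv_quad M H c Y k"
    using of_real_eq_iff by blast
  moreover have "cov_form M H c Y ?d \<ge> 0" by (rule cov_form_nonneg[OF c])
  moreover have "cov_form M H c Y ?z \<le> inv_quad M H c Z k"
    unfolding inv_quad_def by (rule cov_form_mono[OF c Z YZ])
  ultimately show ?thesis by linarith
qed

definition log_det_cov :: "nat \<Rightarrow> complex mat \<Rightarrow> real \<Rightarrow> nat set \<Rightarrow> real" where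
  "log_det_cov M H c S = log 2 (Re (det (cov_mat M H c S)))"

lemma log_det_cov_insert:
  assumes "finite S" "k \<notin> S" "dim_row H = M" "c \<ge> 0"
  shows "log_det_cov M H c (insert k S) - log_det_cov M H c S = log 2 (1 + c * inv_quad M H c S k)"
proof -
  note d = det_cov_mat_real_ge_one[OF assms(1,3,4)]
  have "Re (det (cov_mat M H c (insert k S))) = Re (det (cov_mat M H c S)) * (1 + c * inv_quad M H c S k)"
    by (subst det_cov_mat_insert[OF assms(1-3) det_cov_mat_nonzero[OF assms(1,3,4)]], subst d(1)) simp
  moreover have "1 + c * inv_quad M H c S k > 0"
    using inv_quad_nonneg[OF assms(4)] assms(4) by (simp add: add_pos_nonneg)
  ultimately show ?thesis unfolding log_det_cov_def using d(2) by (simp add: log_mult)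
qed

lemma diminishing_returns_log_det_cov:
  assumes "dim_row H = M" "c \<ge> 0"
  shows "diminishing_returns (log_det_cov M H c)"
  unfolding diminishing_returns_def
proof (intro allI impI)
  fix Y Z :: "nat set" and k :: nat assume Z: "finite Z" and YZ: "Y \<subseteq> Z" and k: "k \<notin> Z"
  have "finite Y" "k \<notin> Y" using Z YZ k finite_subset by auto
  have "c * inv_quad M H c Z k \<le> c * inv_quad M H c Y k"
    using inv_quad_antimono[OF Z YZ assms] assms(2) by (rule mult_left_mono)
  moreover have "0 \<le> c * inv_quad M H c Z k"
    by (rule mult_nonneg_nonneg[OF assms(2) inv_quad_nonneg[OF assms(2)]])
  ultimately have "log 2 (1 + c * inv_quad M H c Z k) \<le> log 2 (1 + c * inv_quad M H c Y k)"
    by (intro log_mono) linarith+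
  then show "log_det_cov M H c (insert k Z) - log_det_cov M H c Z \<le>
      log_det_cov M H c (insert k Y) - log_det_cov M H c Y"
    unfolding log_det_cov_insert[OF Z k assms] log_det_cov_insert[OF \<open>finite Y\<close> \<open>k \<notin> Y\<close> assms] .
qed

lemma rate_eq_log_det_cov_diff:
  assumes "finite X" "finite Y" "X \<inter> Y = {}" "dim_row H = M" "P > 0" "N0 > 0"
  shows "rate M H P N0 X Y = log_det_cov M H (P / N0) (X \<union> Y) - log_det_cov M H (P / N0) Y"
proof -
  define c where "c = P / N0"
  have c: "c \<ge> 0" unfolding c_def using assms by simp
  have XY: "finite (X \<union> Y)" using assms by auto
  note Bi = cov_inv[OF det_cov_mat_nonzero[OF assms(2,4) c]]
  let ?B = "cov_mat M H c" and ?Bi = "cov_inv M H c Y"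
  let ?G = "complex_of_real c \<cdot>\<^sub>m gram M H X"
  have "1\<^sub>m M + ?G * ?Bi = (?B Y + ?G) * ?Bi"
    using Bi by (subst add_mult_distrib_mat[OF cov_mat_carrier _ Bi(1)]) (auto simp: gram_carrier)
  also have "\<dots> = ?B (X \<union> Y) * ?Bi" by (simp add: cov_mat_union[OF assms(1-4)])
  finally have "det (1\<^sub>m M + ?G * ?Bi) = det (?B (X \<union> Y)) * det ?Bi"
    using det_mult[OF cov_mat_carrier Bi(1)] by simp
  moreover have "det ?Bi * det (?B Y) = 1"
    using det_mult[OF Bi(1) cov_mat_carrier[of M H c Y]] Bi(3) by simp
  then have "det ?Bi = 1 / det (?B Y)"
    by (rule eq_divide_imp[OF det_cov_mat_nonzero[OF assms(2,4) c]])
  ultimately have "det (1\<^sub>m M + ?G * ?Bi) = det (?B (X \<union> Y)) / det (?B Y)"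
    by simp
  then have "Re (det (1\<^sub>m M + ?G * ?Bi)) = Re (det (?B (X \<union> Y))) / Re (det (?B Y))"
    by (subst (asm) det_cov_mat_real_ge_one(1)[OF XY assms(4) c],
        subst (asm) det_cov_mat_real_ge_one(1)[OF assms(2,4) c]) simp
  moreover have "rate M H P N0 X Y = log 2 (Re (det (1\<^sub>m M + ?G * ?Bi)))"
    unfolding rate_def cov_inv_def cov_mat_def c_def ..
  ultimately show ?thesis unfolding log_det_cov_def c_def[symmetric]
    using det_cov_mat_real_ge_one(2)[OF XY assms(4) c] det_cov_mat_real_ge_one(2)[OF assms(2,4) c]
    by (simp add: log_divide)
qed

theorem lemmaV1:
  fixes M K :: nat and H :: "complex mat" and P N0 :: real and r :: "nat \<Rightarrow> real"
    and Shat :: "nat set" and uo up :: nat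
  assumes "M \<ge> 1" and "K \<ge> 1" and "H \<in> carrier_mat M K"
    and "P > 0" and "N0 > 0"
    and "\<forall>k\<in>{1..K}. r k \<ge> 0"
    and "Shat \<subseteq> {1..K}"
    and "uo \<in> {1..K}" and "up \<in> {1..K}" and "uo \<noteq> up"
    and "uo \<notin> Shat" and "up \<notin> Shat"
    and "rate M H P N0 {uo} Shat \<ge> r uo"
    and "rate M H P N0 {up} Shat \<ge> r up"
    and "rate M H P N0 {uo, up} Shat < r uo + r up"
  shows "\<not> (\<exists>Sstar. Sstar \<subseteq> {1..K} - Shat \<and> Sstar \<inter> {uo, up} \<noteq> {} \<and>
            (\<forall>S. S \<subseteq> Sstar \<longrightarrow>
               (\<Sum>k\<in>S. r k) \<le> rate M H P N0 S ({1..K} - Sstar)))"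
proof
  assume "\<exists>Sstar. Sstar \<subseteq> {1..K} - Shat \<and> Sstar \<inter> {uo, up} \<noteq> {} \<and>
            (\<forall>S. S \<subseteq> Sstar \<longrightarrow> (\<Sum>k\<in>S. r k) \<le> rate M H P N0 S ({1..K} - Sstar))"
  then obtain Sstar where Sstar: "Sstar \<subseteq> {1..K} - Shat" "Sstar \<inter> {uo, up} \<noteq> {}"
    and decodable: "\<And>S. S \<subseteq> Sstar \<Longrightarrow> (\<Sum>k\<in>S. r k) \<le> rate M H P N0 S ({1..K} - Sstar)"
    by blast
  define C where "C = Sstar \<inter> {uo, up}"
  define T where "T = {1..K} - Sstar"
  let ?f = "log_det_cov M H (P / N0)"
  have HM: "dim_row H = M" using assms(3) by simp
  have f: "diminishing_returns ?f"
    by (rule diminishing_returns_log_det_cov[OF HM]) (use assms(4,5) in simp)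
  have rate: "rate M H P N0 X Y = ?f (X \<union> Y) - ?f Y" if "finite X" "finite Y" "X \<inter> Y = {}" for X Y
    by (rule rate_eq_log_det_cov_diff[OF that HM assms(4,5)])
  have Shat: "finite Shat" "Shat \<subseteq> T" using assms(7) Sstar(1) finite_subset by (auto simp: T_def)
  have C: "C \<subseteq> {uo, up}" "C \<noteq> {}" "C \<inter> T = {}" "{uo, up} - C \<subseteq> T"
    using Sstar(2) assms(8,9) by (auto simp: C_def T_def)
  have gains: "r uo \<le> ?f (insert uo Shat) - ?f Shat" "r up \<le> ?f (insert up Shat) - ?f Shat"
      "?f (insert uo (insert up Shat)) - ?f Shat < r uo + r up"
    using assms(11-15) rate[of "{uo}" Shat] rate[of "{up}" Shat] rate[of "{uo, up}" Shat] Shat(1)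
    by auto
  have "sum r C \<le> rate M H P N0 C T"
    using decodable[of C] unfolding C_def T_def by blast
  also have "\<dots> = ?f (C \<union> T) - ?f T"
    by (rule rate) (use C(3) in \<open>auto simp: C_def T_def\<close>)
  also have "\<dots> < sum r C"
    by (rule diminishing_returns_pair_gain_less[OF f _ Shat(2) assms(10-12) gains C]) (simp add: T_def)
  finally show False by simp
qed

end
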